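(* Let \[ q_1 = \tfrac{1}{3}(-1, 2, 2)^T,\quad q_2 = \tfrac13 (2,-1,2)^T,\quad q_3 = \tfrac13 (2,2,-1)^T \in \mathbb{R}^3 . \] For every $z \in \{\pm1\}^3$ whose entries are not all equal and every real $3\times 3$ diagonal matrix $X$, \[ \Big\| X + \sum_{i=1}^3 z(i)\, q_i q_i^{T} \Big\| \geq 1, \] where $\|\cdot\|$ denotes the operator norm (induced by the Euclidean norm). *)

theory Defs
  imports "HOL-Analysis.Analysis"
begin

definition q :: "3 \<Rightarrow> real^3" where
  "q i = (if i = 1 then (1/3) *\<^sub>R vector [-1, 2, 2]
          else if i = 2 then (1/3) *\<^sub>R vector [2, -1, 2]
          else (1/3) *\<^sub>R vector [2, 2, -1])"

definition outer :: "real^'n \<Rightarrow> real^'m \<Rightarrow> real^'m^'n" where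
  "outer u v = (\<chi> i j. u $ i * v $ j)"

definition opnorm :: "real^'n^'m \<Rightarrow> real" where
  "opnorm A = onorm (\<lambda>x. A *v x)"

definition is_diag :: "real^'n^'n \<Rightarrow> bool" where
  "is_diag X \<longleftrightarrow> (\<forall>i j. i \<noteq> j \<longrightarrow> X $ i $ j = 0)"

end

theory Submission
  imports Defs
begin

text \<open>Since q_1, q_2, q_3 is an orthonormal basis, \<open>\<Sum>i. q_i q_i^T = I\<close>, so a sign vector z that is not
constant turns \<open>A = \<Sum>i. z(i) q_i q_i^T\<close> into \<open>s (I - 2 q_k q_k^T)\<close>, a signed Householder reflection,
where z(k) = -s and z(i) = s for i \<noteq> k. An isometry A satisfies
\<open>\<langle>Av, Xv\<rangle> + |v|^2 = \<langle>Av, (X + A) v\<rangle> \<le> \<parallel>X + A\<parallel> |v|^2\<close> for every v, and for diagonal X the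
term \<open>\<langle>Av, Xv\<rangle>\<close> only sees the diagonal of \<open>A v v^T\<close>. Hence a nonnegative combination of vectors
v for which these diagonals cancel eliminates X and yields \<open>\<parallel>X + A\<parallel> \<ge> 1\<close>; for the reflection,
\<open>4 e_i - e_k\<close> (any i \<noteq> k) and \<open>e_k\<close> with weights 7 and 9 do the job.\<close>

lemma outer_mult_vec: "outer u v *v x = (v \<bullet> x) *\<^sub>R u"
  by (simp add: vec_eq_iff outer_def matrix_vector_mult_def inner_vec_def sum_distrib_left mult_ac)

lemma diag_mult_vec:
  assumes "is_diag X"
  shows "(X *v v) $ j = X $ j $ j * v $ j"
proof -
  have "(X *v v) $ j = (\<Sum>i\<in>UNIV. X $ j $ i * v $ i)"
    by (simp add: matrix_vector_mult_def)
  also have "\<dots> = (\<Sum>i\<in>{j}. X $ j $ i * v $ i)"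
    by (rule sum.mono_neutral_right) (use assms in \<open>auto simp: is_diag_def\<close>)
  finally show ?thesis by simp
qed

lemma inner_mult_vec_le_opnorm:
  fixes M :: "real^'n^'m"
  shows "u \<bullet> (M *v v) \<le> opnorm M * norm u * norm v"
proof -
  have "u \<bullet> (M *v v) \<le> norm u * norm (M *v v)"
    by (rule norm_cauchy_schwarz)
  also have "norm (M *v v) \<le> opnorm M * norm v"
    unfolding opnorm_def by (rule onorm) simp
  then have "norm u * norm (M *v v) \<le> norm u * (opnorm M * norm v)"
    by (simp add: mult_left_mono)
  finally show ?thesis by (simp add: mult_ac)
qed

definition householder :: "real^'n \<Rightarrow> real^'n^'n" where
  "householder u = mat 1 - 2 *\<^sub>R outer u u"

lemma householder_mult_vec: "householder u *v x = x - (2 * (u \<bullet> x)) *\<^sub>R u"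
  by (simp add: householder_def matrix_vector_mult_diff_rdistrib outer_mult_vec
      flip: scaleR_matrix_vector_assoc)

lemma norm_householder_mult_vec:
  assumes "norm u = 1"
  shows "norm (householder u *v x) = norm x"
proof -
  have "(norm (householder u *v x))\<^sup>2 = (norm x)\<^sup>2 - 4 * (u \<bullet> x)\<^sup>2 + 4 * (u \<bullet> x)\<^sup>2 * (norm u)\<^sup>2"
    unfolding householder_mult_vec power2_norm_eq_inner
    by (simp add: inner_commute algebra_simps power2_eq_square)
  then show ?thesis
    using assms by simp
qed

lemma opnorm_diag_plus_ge_1:
  fixes A X :: "real^'n^'n" and v :: "'k \<Rightarrow> real^'n"
  assumes "is_diag X" and "finite K"
    and isometric: "\<And>k. k \<in> K \<Longrightarrow> norm (A *v v k) = norm (v k)"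
    and nonneg: "\<And>k. k \<in> K \<Longrightarrow> c k \<ge> 0"
    and diag_cancel: "\<And>j. (\<Sum>k\<in>K. c k * ((A *v v k) $ j * v k $ j)) = 0"
    and pos: "(\<Sum>k\<in>K. c k * (norm (v k))\<^sup>2) > 0"
  shows "opnorm (X + A) \<ge> 1"
proof -
  have bound: "(A *v v k) \<bullet> (X *v v k) + (norm (v k))\<^sup>2 \<le> opnorm (X + A) * (norm (v k))\<^sup>2"
    if "k \<in> K" for k
  proof -
    have "(A *v v k) \<bullet> ((X + A) *v v k) = (A *v v k) \<bullet> (X *v v k) + (norm (v k))\<^sup>2"
      using isometric[OF that]
      by (simp add: matrix_vector_mult_add_rdistrib inner_add_right flip: power2_norm_eq_inner)
    with inner_mult_vec_le_opnorm[of "A *v v k" "X + A" "v k"] isometric[OF that]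
    show ?thesis by (simp add: power2_eq_square mult_ac)
  qed
  have "(\<Sum>k\<in>K. c k * ((A *v v k) \<bullet> (X *v v k)))
      = (\<Sum>j\<in>UNIV. X $ j $ j * (\<Sum>k\<in>K. c k * ((A *v v k) $ j * v k $ j)))"
    by (simp add: inner_vec_def diag_mult_vec[OF assms(1)] sum_distrib_left mult_ac
        sum.swap[where A = K])
  also have "\<dots> = 0"
    by (simp add: diag_cancel)
  finally have "(\<Sum>k\<in>K. c k * (norm (v k))\<^sup>2)
      = (\<Sum>k\<in>K. c k * ((A *v v k) \<bullet> (X *v v k) + (norm (v k))\<^sup>2))"
    by (simp add: distrib_left sum.distrib)
  also have "\<dots> \<le> (\<Sum>k\<in>K. c k * (opnorm (X + A) * (norm (v k))\<^sup>2))"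
    by (intro sum_mono mult_left_mono bound nonneg)
  also have "\<dots> = opnorm (X + A) * (\<Sum>k\<in>K. c k * (norm (v k))\<^sup>2)"
    by (simp add: sum_distrib_left mult_ac)
  finally show ?thesis
    using pos by simp
qed

lemma sign_vector_not_constant:
  fixes z :: "real^3"
  assumes "\<forall>i. z $ i \<in> {-1, 1}" and "\<not> (\<forall>i j. z $ i = z $ j)"
  obtains k s where "\<bar>s\<bar> = 1" and "z $ k = - s" and "\<And>i. i \<noteq> k \<Longrightarrow> z $ i = s"
proof -
  have z: "z $ 1 \<in> {-1, 1}" "z $ 2 \<in> {-1, 1}" "z $ 3 \<in> {-1, 1}"
    using assms(1) by auto
  have ne: "\<not> (z $ 1 = z $ 2 \<and> z $ 2 = z $ 3)"
    using assms(2) by (auto simp: forall_3)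
  let ?s = "if z $ 2 = z $ 3 then z $ 2 else z $ 1"
  let ?k = "if z $ 2 = z $ 3 then 1 else if z $ 1 = z $ 3 then 2 else 3 :: 3"
  show thesis
  proof (rule that[of ?s ?k])
    show "\<bar>?s\<bar> = 1"
      using z by auto
    show "z $ ?k = - ?s"
      using z ne by auto
    show "z $ i = ?s" if "i \<noteq> ?k" for i
      using exhaust_3[of i] that z ne by (auto split: if_splits)
  qed
qed

lemma norm_q: "norm (q k) = 1"
  using exhaust_3[of k]
  by (auto simp: q_def norm_eq_sqrt_inner inner_vec_def sum_3)

lemma sum_outer_q: "(\<Sum>i\<in>UNIV. outer (q i) (q i)) = mat 1"
  by (simp add: vec_eq_iff forall_3 sum_3 outer_def q_def mat_def)

lemma sum_scaleR_outer_q: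
  assumes "z $ k = - s" and "\<And>i. i \<noteq> k \<Longrightarrow> z $ i = s"
  shows "(\<Sum>i\<in>UNIV. z $ i *\<^sub>R outer (q i) (q i)) = s *\<^sub>R householder (q k)"
proof -
  have "(\<Sum>i\<in>UNIV. z $ i *\<^sub>R outer (q i) (q i))
      = s *\<^sub>R (\<Sum>i\<in>UNIV. outer (q i) (q i)) + (\<Sum>i\<in>UNIV. (z $ i - s) *\<^sub>R outer (q i) (q i))"
    by (simp add: scaleR_diff_left sum_subtractf scaleR_sum_right)
  also have "(\<Sum>i\<in>UNIV. (z $ i - s) *\<^sub>R outer (q i) (q i)) = (- 2 * s) *\<^sub>R outer (q k) (q k)"
    using assms by (subst sum.remove[of _ k]) (auto intro!: sum.neutral)
  finally show ?thesis
    by (simp add: sum_outer_q householder_def scaleR_diff_right)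
qed

text \<open>With \<open>H = householder (q k)\<close> and \<open>w = 4 e_i - e_k\<close> one has \<open>H w = 4 e_i + 5 e_k - 4 (1,1,1)\<close> and
\<open>H e_k = e_k / 3 + (4/9) (1,1,1)\<close>, so the diagonals of \<open>(H w) w^T\<close> and \<open>(H e_k) e_k^T\<close> are
\<open>-e_k\<close> and \<open>(7/9) e_k\<close>.\<close>
lemma householder_q_diag_cancel:
  fixes i j k :: 3
  assumes "i \<noteq> k"
  defines "w \<equiv> 4 *\<^sub>R axis i 1 - axis k (1::real)"
  shows "7 * ((householder (q k) *v w) $ j * w $ j)
       + 9 * ((householder (q k) *v axis k 1) $ j * axis k 1 $ j) = 0"
  using assms exhaust_3[of i] exhaust_3[of j] exhaust_3[of k]
  by (auto simp: w_def householder_mult_vec q_def inner_vec_def sum_3 axis_def)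

lemma opnorm_diag_plus_signed_householder_q_ge_1:
  fixes X :: "real^3^3"
  assumes "is_diag X" and "\<bar>s\<bar> = 1"
  shows "opnorm (X + s *\<^sub>R householder (q k)) \<ge> 1"
proof -
  obtain i :: 3 where "i \<noteq> k"
    using exhaust_3[of k] by (metis one_neq_zero zero_neq_numeral)
  define w where "w = 4 *\<^sub>R axis i 1 - axis k (1::real)"
  have isometric: "norm ((s *\<^sub>R householder (q k)) *v x) = norm x" for x
    using assms(2) by (simp add: norm_householder_mult_vec norm_q flip: scaleR_matrix_vector_assoc)
  have diag_cancel: "(\<Sum>b\<in>UNIV. (if b then 9 else 7) *
      (((s *\<^sub>R householder (q k)) *v (if b then axis k 1 else w)) $ j * (if b then axis k 1 else w) $ j)) = 0"
    for j
  proof -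
    have "(\<Sum>b\<in>UNIV. (if b then 9 else 7) *
        (((s *\<^sub>R householder (q k)) *v (if b then axis k 1 else w)) $ j * (if b then axis k 1 else w) $ j))
      = s * (7 * ((householder (q k) *v w) $ j * w $ j)
          + 9 * ((householder (q k) *v axis k 1) $ j * axis k 1 $ j))"
      by (simp add: UNIV_bool algebra_simps flip: scaleR_matrix_vector_assoc)
    then show ?thesis
      using householder_q_diag_cancel[OF \<open>i \<noteq> k\<close>, of j, folded w_def] by simp
  qed
  have pos: "(\<Sum>b\<in>UNIV. (if b then 9 else 7) * (norm (if b then axis k 1 else w))\<^sup>2) > (0::real)"
    by (simp add: UNIV_bool add_nonneg_pos)
  show ?thesis
    by (rule opnorm_diag_plus_ge_1[OF assms(1) finite _ _ diag_cancel pos]) (simp_all add: isometric)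
qed

theorem lemma5:
  fixes z :: "real^3" and X :: "real^3^3"
  assumes "\<forall>i. z $ i \<in> {-1, 1}"
    and "\<not> (\<forall>i j. z $ i = z $ j)"
    and "is_diag X"
  shows "opnorm (X + (\<Sum>i\<in>UNIV. z $ i *\<^sub>R outer (q i) (q i))) \<ge> 1"
proof -
  obtain k s where "\<bar>s\<bar> = 1" and "z $ k = - s" and "\<And>i. i \<noteq> k \<Longrightarrow> z $ i = s"
    using sign_vector_not_constant[OF assms(1,2)] by blast
  then have "(\<Sum>i\<in>UNIV. z $ i *\<^sub>R outer (q i) (q i)) = s *\<^sub>R householder (q k)"
    by (intro sum_scaleR_outer_q)
  with opnorm_diag_plus_signed_householder_q_ge_1[OF assms(3) \<open>\<bar>s\<bar> = 1\<close>] show ?thesis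
    by simp
qed

end
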